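(* For every integer $T\ge 5$ and every $\sigma\in\mathfrak S_3$, the vector $\sigma c$ with $c=[1,0,0,0,0,0]$ defines a facet of $P^T$.
   Context: For an integer $T\ge 2$, let $\Omega_T$ be the set of words $w=s_1s_2\cdots s_T$ over $\{1,2,3\}$ with $s_l\neq s_{l+1}$ for $l=1,\dots,T-1$. For $w\in\Omega_T$ and an ordered pair $ij$, $i\neq j$, let $x_{ij}(w)$ be the number of indices $1\le l\le T-1$ with $s_ls_{l+1}=ij$. Vectors of $\mathbb R^6$ are indexed in the order $[x_{12},x_{13},x_{21},x_{23},x_{31},x_{32}]$. Let $a_w=[x_{12}(w),\dots,x_{32}(w)]$ and $P^T=\mathrm{conv}\{a_w:w\in\Omega_T\}$ (the convex hull of the columns of the design matrix $A^T$). $\mathfrak S_3$ acts on $\mathbb R^6$ by $(\sigma c)_{ij}=c_{\sigma(i)\sigma(j)}$. A vector $c$ defines a facet of $P^T$ if $c\cdot a_w\ge0$ for all $w\in\Omega_T$ and $\{x\in P^T: c\cdot x=0\}$ is a facet of $P^T$. *)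

theory Defs
  imports "HOL-Analysis.Analysis"
begin

definition Omega :: "nat \<Rightarrow> nat list set" where
  "Omega T = {w. length w = T \<and> set w \<subseteq> {1,2,3} \<and>
                 (\<forall>l. l + 1 < T \<longrightarrow> w ! l \<noteq> w ! (l + 1))}"

definition xcount :: "nat list \<Rightarrow> nat \<Rightarrow> nat \<Rightarrow> nat" where
  "xcount w i j = card {l. l + 1 < length w \<and> w ! l = i \<and> w ! (l + 1) = j}"

definition avec :: "nat list \<Rightarrow> real^6" where
  "avec w = vector [real (xcount w 1 2), real (xcount w 1 3), real (xcount w 2 1),
                    real (xcount w 2 3), real (xcount w 3 1), real (xcount w 3 2)]"

definition PT :: "nat \<Rightarrow> (real^6) set" where
  "PT T = convex hull (avec ` Omega T)"

definition coord :: "real^6 \<Rightarrow> nat \<Rightarrow> nat \<Rightarrow> real" where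
  "coord c i j =
     (if (i, j) = (1, 2) then c $ 1 else
      if (i, j) = (1, 3) then c $ 2 else
      if (i, j) = (2, 1) then c $ 3 else
      if (i, j) = (2, 3) then c $ 4 else
      if (i, j) = (3, 1) then c $ 5 else
      if (i, j) = (3, 2) then c $ 6 else 0)"

definition act :: "(nat \<Rightarrow> nat) \<Rightarrow> real^6 \<Rightarrow> real^6" where
  "act \<sigma> c = vector [coord c (\<sigma> 1) (\<sigma> 2), coord c (\<sigma> 1) (\<sigma> 3), coord c (\<sigma> 2) (\<sigma> 1),
                      coord c (\<sigma> 2) (\<sigma> 3), coord c (\<sigma> 3) (\<sigma> 1), coord c (\<sigma> 3) (\<sigma> 2)]"

definition defines_facet :: "nat \<Rightarrow> real^6 \<Rightarrow> bool" where
  "defines_facet T c \<longleftrightarrow>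
     (\<forall>w\<in>Omega T. c \<bullet> avec w \<ge> 0) \<and> {x \<in> PT T. c \<bullet> x = 0} facet_of PT T"

end

theory Submission
  imports Defs
begin

text \<open>The coordinate functional \<open>x\<^sub>1\<^sub>2\<close> is nonnegative on \<open>P\<^sup>T\<close>, and \<open>P\<^sup>T\<close> lies in the
  hyperplane \<open>\<Sum> x\<^sub>i\<^sub>j = T - 1\<close>, so its zero set is a facet as soon as one word contains the
  factor 12 and five words avoiding it have affinely independent vectors; for all \<open>T \<ge> 5\<close> such
  words are obtained from fixed prefixes of length 4 followed by an alternating tail 1313\<dots>.
  The other coordinate functionals follow by symmetry: relabelling the letters by \<open>\<sigma>\<close> permutes
  \<open>\<Omega>\<^sub>T\<close>, and on \<open>\<real>\<^sup>6\<close> it becomes the orthogonal coordinate permutation \<open>act \<sigma>\<close>, which maps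
  \<open>P\<^sup>T\<close> onto itself and the face cut out by \<open>c\<close> onto the face cut out by \<open>act \<sigma> c\<close>.\<close>

lemma UNIV_6: "(UNIV :: 6 set) = set [1, 2, 3, 4, 5, 6]"
proof -
  have "x \<in> {1, 2, 3, 4, 5, 6}" for x :: 6
  proof (induct x)
    case (of_int z)
    then have "z \<in> {0, 1, 2, 3, 4, 5}" by fastforce
    then show ?case by auto
  qed
  then show ?thesis by auto
qed

lemma distinct_6: "distinct [1, 2, 3, 4, 5, 6 :: 6]"
  by simp

lemma all_6: "(\<forall>i::6. P i) \<longleftrightarrow> P 1 \<and> P 2 \<and> P 3 \<and> P 4 \<and> P 5 \<and> P 6"
proof -
  have "(\<forall>i::6. P i) \<longleftrightarrow> (\<forall>i\<in>set [1, 2, 3, 4, 5, 6]. P i)"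
    by (simp only: UNIV_6 [symmetric] ball_UNIV)
  then show ?thesis by simp
qed

lemma vector6_nth [simp]:
  fixes a b c d e f :: "'a::zero"
  shows "vector [a, b, c, d, e, f] $ (1::6) = a" "vector [a, b, c, d, e, f] $ (2::6) = b"
    "vector [a, b, c, d, e, f] $ (3::6) = c" "vector [a, b, c, d, e, f] $ (4::6) = d"
    "vector [a, b, c, d, e, f] $ (5::6) = e" "vector [a, b, c, d, e, f] $ (6::6) = f"
  using distinct_6 by (simp_all add: vector_def)

lemma vector6_eq_iff:
  fixes a b c d e f :: "'a::zero"
  shows "vector [a, b, c, d, e, f] = (vector [a', b', c', d', e', f'] :: 'a^6) \<longleftrightarrow>
    a = a' \<and> b = b' \<and> c = c' \<and> d = d' \<and> e = e' \<and> f = f'"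
  by (simp add: vec_eq_iff all_6)

lemma vector6_add:
  "vector [a, b, c, d, e, f] + vector [a', b', c', d', e', f'] =
    (vector [a + a', b + b', c + c', d + d', e + e', f + f'] :: 'a::monoid_add^6)"
  by (simp add: vec_eq_iff all_6)

lemma vector6_scaleR:
  "r *\<^sub>R vector [a, b, c, d, e, f] = (vector [r * a, r * b, r * c, r * d, r * e, r * f] :: real^6)"
  by (simp add: vec_eq_iff all_6)

lemma vector6_zero: "(0 :: 'a::zero^6) = vector [0, 0, 0, 0, 0, 0]"
  by (simp add: vec_eq_iff all_6)

lemma inner_real6:
  "x \<bullet> (y :: real^6) = x$1 * y$1 + x$2 * y$2 + x$3 * y$3 + x$4 * y$4 + x$5 * y$5 + x$6 * y$6"
proof -
  have "x \<bullet> y = (\<Sum>i\<in>set [1, 2, 3, 4, 5, 6]. x$i * y$i)"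
    by (simp only: inner_vec_def UNIV_6 inner_real_def)
  also have "\<dots> = (\<Sum>i\<leftarrow>[1, 2, 3, 4, 5, 6]. x$i * y$i)"
    by (rule sum.distinct_set_conv_list [OF distinct_6])
  finally show ?thesis by (simp add: add.assoc)
qed

lemma inner_vector6:
  "vector [a, b, c, d, e, f] \<bullet> (vector [a', b', c', d', e', f'] :: real^6) =
    a * a' + b * b' + c * c' + d * d' + e * e' + f * f'"
  by (simp add: inner_real6)

lemma xcount_Nil [simp]: "xcount [] i j = 0"
  and xcount_singleton [simp]: "xcount [a] i j = 0"
  by (simp_all add: xcount_def)

lemma xcount_Cons_Cons [simp]:
  "xcount (a # b # w) i j = (if a = i \<and> b = j then 1 else 0) + xcount (b # w) i j"
proof -
  define A where "A = {l. l + 1 < length (b # w) \<and> (b # w) ! l = i \<and> (b # w) ! (l + 1) = j}"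
  have split: "{l. l + 1 < length (a # b # w) \<and> (a # b # w) ! l = i \<and> (a # b # w) ! (l + 1) = j}
      = {l \<in> {0}. a = i \<and> b = j} \<union> Suc ` A" (is "?L = ?R")
  proof (rule set_eqI)
    show "l \<in> ?L \<longleftrightarrow> l \<in> ?R" for l
      by (cases l) (auto simp: A_def)
  qed
  have "finite A"
    by (rule finite_subset [of _ "{..<length (b # w)}"]) (auto simp: A_def)
  have "xcount (a # b # w) i j = card ?R"
    unfolding xcount_def split ..
  also have "\<dots> = card {l \<in> {0::nat}. a = i \<and> b = j} + card (Suc ` A)"
    using \<open>finite A\<close> by (intro card_Un_disjoint) auto
  also have "\<dots> = (if a = i \<and> b = j then 1 else 0) + xcount (b # w) i j"
    by (simp add: card_image A_def xcount_def)
  finally show ?thesis .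
qed

lemma xcount_append_Cons:
  "xcount (u @ s # v) i j = xcount (u @ [s]) i j + xcount (s # v) i j"
proof (induction u)
  case (Cons a u)
  then show ?case by (cases u) auto
qed simp

lemma xcount_map_inj:
  assumes "inj f"
  shows "xcount (map f w) (f i) (f j) = xcount w i j"
  unfolding xcount_def by (auto simp: inj_eq [OF assms] intro!: arg_cong [where f = card])

lemma Omega_iff: "w \<in> Omega T \<longleftrightarrow> length w = T \<and> set w \<subseteq> {1, 2, 3} \<and> distinct_adj w"
  by (auto simp: Omega_def distinct_adj_conv_nth)

lemma sum_xcount:
  assumes "set w \<subseteq> {1, 2, 3}" and "distinct_adj w"
  shows "xcount w 1 2 + xcount w 1 3 + xcount w 2 1 + xcount w 2 3 + xcount w 3 1 + xcount w 3 2
    = length w - 1"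
  using assms
proof (induction w rule: induct_list012)
  case (3 a b w)
  then have "a = 1 \<or> a = 2 \<or> a = 3" "b = 1 \<or> b = 2 \<or> b = 3" "a \<noteq> b"
    by auto
  then have "(if a = 1 \<and> b = 2 then 1 else 0) + (if a = 1 \<and> b = 3 then 1 else 0) +
      (if a = 2 \<and> b = 1 then 1 else 0) + (if a = 2 \<and> b = 3 then 1 else 0) +
      (if a = 3 \<and> b = 1 then 1 else 0) + (if a = 3 \<and> b = 2 then 1 else 0) = (1::nat)"
    by (elim disjE) simp_all
  moreover have "set (b # w) \<subseteq> {1, 2, 3}" "distinct_adj (b # w)"
    using "3.prems" by auto
  ultimately show ?case
    using "3.IH"(2) by (simp split del: if_split)
qed simp_all

lemma map_permutes_in_Omega:
  assumes "\<sigma> permutes {1, 2, 3}" and "w \<in> Omega T"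
  shows "map \<sigma> w \<in> Omega T"
proof -
  have "set (map \<sigma> w) \<subseteq> \<sigma> ` {1, 2, 3}"
    using assms(2) by (auto simp: Omega_iff)
  also have "\<dots> = {1, 2, 3}"
    by (rule permutes_image [OF assms(1)])
  moreover have "distinct_adj (map \<sigma> w)"
    using assms permutes_inj [OF assms(1)]
    by (auto simp: Omega_iff intro: distinct_adj_mapI inj_on_subset)
  ultimately show ?thesis
    using assms(2) by (simp add: Omega_iff)
qed

lemma facet_of_linear_image:
  assumes "linear f" "inj f"
  shows "(f ` F facet_of f ` S) \<longleftrightarrow> F facet_of S"
  using assms by (simp add: facet_of_def face_of_linear_image)

lemma zero_set_facet_of_convex_hull:
  fixes c :: "'a::euclidean_space"
  assumes nonneg: "\<And>x. x \<in> S \<Longrightarrow> c \<bullet> x \<ge> 0"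
    and off: "a \<in> S" "c \<bullet> a \<noteq> 0"
    and Z: "Z \<subseteq> S" "Z \<noteq> {}" "\<And>x. x \<in> Z \<Longrightarrow> c \<bullet> x = 0"
    and dim: "aff_dim S \<le> aff_dim Z + 1"
  shows "{x \<in> convex hull S. c \<bullet> x = 0} facet_of convex hull S"
proof -
  define F where "F = {x \<in> convex hull S. c \<bullet> x = 0}"
  have "convex hull S \<subseteq> {x. c \<bullet> x \<ge> 0}"
    using nonneg by (intro hull_minimal) (auto simp: convex_halfspace_ge)
  then have "convex hull S \<inter> {x. (- c) \<bullet> x = 0} face_of convex hull S"
    by (intro face_of_Int_supporting_hyperplane_le) auto
  moreover have "convex hull S \<inter> {x. (- c) \<bullet> x = 0} = F"
    by (auto simp: F_def)
  ultimately have face: "F face_of convex hull S"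
    by simp
  have "Z \<subseteq> F"
    using Z hull_subset [of S convex] by (auto simp: F_def)
  moreover have "F \<noteq> convex hull S"
    using off hull_subset [of S convex] by (auto simp: F_def)
  then have "aff_dim F < aff_dim S"
    using face_of_aff_dim_lt [OF convex_convex_hull face] by (simp add: aff_dim_convex_hull)
  ultimately show ?thesis
    using Z(2) dim aff_dim_subset [of Z F]
    by (auto simp: facet_of_def face aff_dim_convex_hull F_def [symmetric])
qed

lemma aff_dim_eq_4_if_affine_independent:
  fixes v1 v2 v3 v4 v5 :: "'a::euclidean_space"
  assumes distinct: "distinct [v1, v2, v3, v4, v5]"
    and indep: "\<And>u1 u2 u3 u4 u5. u1 + u2 + u3 + u4 + u5 = 0 \<Longrightarrow>
       u1 *\<^sub>R v1 + u2 *\<^sub>R v2 + u3 *\<^sub>R v3 + u4 *\<^sub>R v4 + u5 *\<^sub>R v5 = 0 \<Longrightarrow>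
       u1 = 0 \<and> u2 = 0 \<and> u3 = 0 \<and> u4 = 0 \<and> u5 = 0"
  shows "aff_dim {v1, v2, v3, v4, v5} = 4"
proof -
  let ?V = "{v1, v2, v3, v4, v5}"
  have "\<not> affine_dependent ?V"
  proof
    assume "affine_dependent ?V"
    then obtain U where U: "sum U ?V = 0" "(\<Sum>v\<in>?V. U v *\<^sub>R v) = 0" "\<exists>v\<in>?V. U v \<noteq> 0"
      by (auto simp: affine_dependent_explicit_finite)
    then have "U v1 + U v2 + U v3 + U v4 + U v5 = 0"
      "U v1 *\<^sub>R v1 + U v2 *\<^sub>R v2 + U v3 *\<^sub>R v3 + U v4 *\<^sub>R v4 + U v5 *\<^sub>R v5 = 0"
      using distinct by (simp_all add: add.assoc)
    with indep U(3) show False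
      by blast
  qed
  then have "int (card ?V) = aff_dim ?V + 1"
    by (rule aff_dim_affine_independent)
  with distinct show ?thesis
    by simp
qed

lemma avec_append_Cons: "avec (u @ s # v) = avec (u @ [s]) + avec (s # v)"
  \<comment> \<open>\<open>xcount_append_Cons\<close> loops as a rewrite rule: \<open>u @ [s]\<close> matches its left-hand side\<close>
  by (simp only: avec_def xcount_append_Cons [of u s v] of_nat_add vector6_add)

lemma inner_ones_avec:
  assumes "w \<in> Omega T"
  shows "vector [1, 1, 1, 1, 1, 1] \<bullet> avec w = real (T - 1)"
proof -
  have "vector [1, 1, 1, 1, 1, 1] \<bullet> avec w = real (xcount w 1 2 + xcount w 1 3 + xcount w 2 1
      + xcount w 2 3 + xcount w 3 1 + xcount w 3 2)"
    by (simp add: avec_def inner_vector6)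
  with assms sum_xcount [of w] show ?thesis
    by (simp add: Omega_iff)
qed

lemma aff_dim_avec_Omega_le: "aff_dim (avec ` Omega T) \<le> 5"
proof -
  define ones :: "real^6" where "ones = vector [1, 1, 1, 1, 1, 1]"
  have "ones \<noteq> 0"
    by (simp add: ones_def vector6_zero vector6_eq_iff)
  have "avec ` Omega T \<subseteq> {x. ones \<bullet> x = real (T - 1)}"
    using inner_ones_avec by (auto simp: ones_def)
  then have "aff_dim (avec ` Omega T) \<le> aff_dim {x. ones \<bullet> x = real (T - 1)}"
    by (rule aff_dim_subset)
  also have "\<dots> = 5"
    using aff_dim_hyperplane [OF \<open>ones \<noteq> 0\<close>] by simp
  finally show ?thesis .
qed

lemma coord_add: "coord (x + y) i j = coord x i j + coord y i j"
  and coord_scaleR: "coord (r *\<^sub>R x) i j = r * coord x i j"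
  by (simp_all add: coord_def)

lemma linear_act: "linear (act \<sigma>)"
  by (rule linearI) (simp_all add: act_def coord_add coord_scaleR vector6_add vector6_scaleR)

lemma permutes_123_cases:
  assumes "\<sigma> permutes {1, 2, 3 :: nat}"
  obtains "\<sigma> 1 = 1" "\<sigma> 2 = 2" "\<sigma> 3 = 3" | "\<sigma> 1 = 1" "\<sigma> 2 = 3" "\<sigma> 3 = 2"
    | "\<sigma> 1 = 2" "\<sigma> 2 = 1" "\<sigma> 3 = 3" | "\<sigma> 1 = 2" "\<sigma> 2 = 3" "\<sigma> 3 = 1"
    | "\<sigma> 1 = 3" "\<sigma> 2 = 1" "\<sigma> 3 = 2" | "\<sigma> 1 = 3" "\<sigma> 2 = 2" "\<sigma> 3 = 1"
proof -
  have range: "\<sigma> 1 \<in> {1, 2, 3}" "\<sigma> 2 \<in> {1, 2, 3}" "\<sigma> 3 \<in> {1, 2, 3}"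
    using permutes_in_image [OF assms] by auto
  have "\<sigma> 1 \<noteq> \<sigma> 2" "\<sigma> 1 \<noteq> \<sigma> 3" "\<sigma> 2 \<noteq> \<sigma> 3"
    by (simp_all add: inj_eq [OF permutes_inj [OF assms]])
  with range that show thesis
    by (elim insertE emptyE) auto
qed

lemma inner_act_act:
  assumes "\<sigma> permutes {1, 2, 3}"
  shows "act \<sigma> c \<bullet> act \<sigma> x = c \<bullet> x"
  using assms
  by (cases rule: permutes_123_cases) (simp_all add: act_def coord_def inner_vector6 inner_real6)

lemma inj_act:
  assumes "\<sigma> permutes {1, 2, 3}"
  shows "inj (act \<sigma>)"
  unfolding linear_injective_0 [OF linear_act]
  using inner_act_act [OF assms] by (metis inner_eq_zero_iff inner_zero_left)

lemma coord_avec: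
  "i \<in> {1, 2, 3} \<Longrightarrow> j \<in> {1, 2, 3} \<Longrightarrow> i \<noteq> j \<Longrightarrow> coord (avec w) i j = real (xcount w i j)"
  by (auto simp: coord_def avec_def)

lemma act_avec_map:
  assumes "\<sigma> permutes {1, 2, 3}"
  shows "act \<sigma> (avec (map \<sigma> w)) = avec w"
proof -
  have "coord (avec (map \<sigma> w)) (\<sigma> i) (\<sigma> j) = real (xcount w i j)"
    if "i \<in> {1, 2, 3}" "j \<in> {1, 2, 3}" "i \<noteq> j" for i j
    using that permutes_in_image [OF assms] permutes_inj [OF assms]
    by (simp add: coord_avec inj_eq xcount_map_inj)
  then have "act \<sigma> (avec (map \<sigma> w)) = vector [real (xcount w 1 2), real (xcount w 1 3),
      real (xcount w 2 1), real (xcount w 2 3), real (xcount w 3 1), real (xcount w 3 2)]"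
    unfolding act_def by simp
  then show ?thesis
    by (simp add: avec_def)
qed

lemma act_avec_Omega:
  assumes "\<sigma> permutes {1, 2, 3}"
  shows "act \<sigma> ` avec ` Omega T = avec ` Omega T"
proof
  show "act \<sigma> ` avec ` Omega T \<subseteq> avec ` Omega T"
  proof clarify
    fix w assume "w \<in> Omega T"
    then have "map (inv \<sigma>) w \<in> Omega T"
      by (rule map_permutes_in_Omega [OF permutes_inv [OF assms]])
    moreover have "map \<sigma> (map (inv \<sigma>) w) = w"
      by (simp add: permutes_inverses [OF assms] map_idI)
    ultimately show "act \<sigma> (avec w) \<in> avec ` Omega T"
      using act_avec_map [OF assms, of "map (inv \<sigma>) w"] by auto
  qed
  show "avec ` Omega T \<subseteq> act \<sigma> ` avec ` Omega T"
    using act_avec_map [OF assms] map_permutes_in_Omega [OF assms] by (metis image_eqI image_subsetI)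
qed

lemma act_PT:
  assumes "\<sigma> permutes {1, 2, 3}"
  shows "act \<sigma> ` PT T = PT T"
  by (simp add: PT_def convex_hull_linear_image [OF linear_act] act_avec_Omega [OF assms])

lemma defines_facet_act:
  assumes \<sigma>: "\<sigma> permutes {1, 2, 3}" and "defines_facet T c"
  shows "defines_facet T (act \<sigma> c)"
proof -
  have "act \<sigma> c \<bullet> avec w \<ge> 0" if "w \<in> Omega T" for w
  proof -
    have "act \<sigma> c \<bullet> avec w = c \<bullet> avec (map \<sigma> w)"
      by (metis act_avec_map inner_act_act \<sigma>)
    then show ?thesis
      using assms that map_permutes_in_Omega by (auto simp: defines_facet_def)
  qed
  moreover have "{x \<in> PT T. act \<sigma> c \<bullet> x = 0} facet_of PT T"
  proof -
    have "{x \<in> PT T. act \<sigma> c \<bullet> x = 0} = act \<sigma> ` {x \<in> PT T. c \<bullet> x = 0}"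
      using act_PT [OF \<sigma>, of T] inner_act_act [OF \<sigma>, of c] by force
    moreover have "act \<sigma> ` {x \<in> PT T. c \<bullet> x = 0} facet_of act \<sigma> ` PT T"
      using assms(2) facet_of_linear_image [OF linear_act inj_act [OF \<sigma>]]
      by (simp add: defines_facet_def)
    ultimately show ?thesis
      by (simp add: act_PT [OF \<sigma>])
  qed
  ultimately show ?thesis
    by (simp add: defines_facet_def)
qed

fun alternating :: "'a \<Rightarrow> 'a \<Rightarrow> nat \<Rightarrow> 'a list" where
  "alternating s t 0 = []"
| "alternating s t (Suc n) = s # alternating t s n"

lemma length_alternating [simp]: "length (alternating s t n) = n"
  by (induction n arbitrary: s t) auto

lemma set_alternating: "set (alternating s t n) \<subseteq> {s, t}"
  by (induction n arbitrary: s t) auto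

lemma distinct_adj_alternating: "s \<noteq> t \<Longrightarrow> distinct_adj (alternating s t n)"
proof (induction n arbitrary: s t)
  case (Suc n)
  then show ?case by (cases n) auto
qed simp

lemma xcount_alternating:
  "(i, j) \<noteq> (s, t) \<Longrightarrow> (i, j) \<noteq> (t, s) \<Longrightarrow> xcount (alternating s t n) i j = 0"
proof (induction n arbitrary: s t)
  case (Suc n)
  then show ?case by (cases n) auto
qed simp

lemma append_alternating_in_Omega:
  assumes "set u \<subseteq> {1, 2, 3}" "distinct_adj (u @ [s])" "s \<in> {1, 2, 3}" "t \<in> {1, 2, 3}" "s \<noteq> t"
  shows "u @ s # alternating t s n \<in> Omega (length u + Suc n)"
proof -
  have "distinct_adj (s # alternating t s n)"
    using distinct_adj_alternating [of s t "Suc n"] assms(5) by simp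
  with assms set_alternating [of t s n] show ?thesis
    by (auto simp: Omega_iff distinct_adj_append_iff)
qed

lemma aff_dim_x12_witnesses:
  "aff_dim {vector [0, 2, 0, 0, 2, 0], vector [0, 1, 0, 1, 1, 1], vector [0, 1, 2, 0, 0, 1],
      vector [0, 1, 0, 1, 2, 0], vector [0, 1, 1, 0, 1, 1] :: real^6} = 4"
proof (rule aff_dim_eq_4_if_affine_independent)
  fix u1 u2 u3 u4 u5 :: real
  assume "u1 + u2 + u3 + u4 + u5 = 0"
    and "u1 *\<^sub>R vector [0, 2, 0, 0, 2, 0] + u2 *\<^sub>R vector [0, 1, 0, 1, 1, 1]
      + u3 *\<^sub>R vector [0, 1, 2, 0, 0, 1] + u4 *\<^sub>R vector [0, 1, 0, 1, 2, 0]
      + u5 *\<^sub>R vector [0, 1, 1, 0, 1, 1] = (0 :: real^6)"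
  then show "u1 = 0 \<and> u2 = 0 \<and> u3 = 0 \<and> u4 = 0 \<and> u5 = 0"
    unfolding vector6_scaleR vector6_add vector6_zero vector6_eq_iff by linarith
qed (simp add: vector6_eq_iff)

lemma defines_facet_x12:
  assumes "T \<ge> 5"
  shows "defines_facet T (vector [1, 0, 0, 0, 0, 0])"
proof -
  define e :: "real^6" where "e = vector [1, 0, 0, 0, 0, 0]"
  have e_avec: "e \<bullet> avec w = real (xcount w 1 2)" for w
    by (simp add: e_def avec_def inner_vector6)
  define tail :: "nat list" where "tail = 1 # alternating 3 1 (T - 5)"
  have word: "p @ tail \<in> Omega T" if "length p = 4" "set p \<subseteq> {1, 2, 3}" "distinct_adj (p @ [1])" for p
    using append_alternating_in_Omega [of p 1 3 "T - 5"] that assms by (simp add: tail_def)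
  have avec_word: "avec (p @ tail) = avec tail + avec (p @ [1])" for p
    unfolding tail_def avec_append_Cons [of p 1 "alternating 3 1 (T - 5)"] by (rule add.commute)
  have "xcount tail 1 2 = 0"
    using xcount_alternating [of 1 2 "1::nat" 3 "Suc (T - 5)"] by (simp add: tail_def)
  then have e_word: "e \<bullet> avec (p @ tail) = real (xcount (p @ [1]) 1 2)" for p
    by (simp add: avec_word inner_add_right e_avec)
  define prefixes :: "nat list list"
    where "prefixes = [[1, 3, 1, 3], [1, 3, 2, 3], [2, 1, 3, 2], [2, 3, 1, 3], [3, 1, 3, 2]]"
  have prefix_words: "p @ tail \<in> Omega T" "e \<bullet> avec (p @ tail) = 0" if "p \<in> set prefixes" for p
  proof -
    have "length p = 4" "set p \<subseteq> {1, 2, 3}" "distinct_adj (p @ [1])" "xcount (p @ [1]) 1 2 = 0"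
      using that by (auto simp: prefixes_def)
    then show "p @ tail \<in> Omega T" "e \<bullet> avec (p @ tail) = 0"
      by (simp_all add: word e_word)
  qed
  define Z where "Z = (\<lambda>p. avec (p @ tail)) ` set prefixes"
  have "Z = (+) (avec tail) ` (\<lambda>p. avec (p @ [1])) ` set prefixes"
    unfolding Z_def avec_word image_image ..
  also have "(\<lambda>p. avec (p @ [1])) ` set prefixes = {vector [0, 2, 0, 0, 2, 0], vector [0, 1, 0, 1, 1, 1],
      vector [0, 1, 2, 0, 0, 1], vector [0, 1, 0, 1, 2, 0], vector [0, 1, 1, 0, 1, 1]}"
    by (simp add: prefixes_def avec_def)
  finally have "aff_dim Z = 4"
    using aff_dim_x12_witnesses by (simp only: aff_dim_translation_eq)
  have "{x \<in> convex hull (avec ` Omega T). e \<bullet> x = 0} facet_of convex hull (avec ` Omega T)"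
  proof (rule zero_set_facet_of_convex_hull)
    show "avec ([1, 2, 1, 2] @ tail) \<in> avec ` Omega T" "e \<bullet> avec ([1, 2, 1, 2] @ tail) \<noteq> 0"
      using word [of "[1, 2, 1, 2]"] e_word [of "[1, 2, 1, 2]"] by simp_all
    show "Z \<subseteq> avec ` Omega T" "\<And>x. x \<in> Z \<Longrightarrow> e \<bullet> x = 0"
      using prefix_words by (auto simp: Z_def)
    show "aff_dim (avec ` Omega T) \<le> aff_dim Z + 1"
      using aff_dim_avec_Omega_le \<open>aff_dim Z = 4\<close> by simp
  qed (auto simp: Z_def prefixes_def e_avec)
  then show ?thesis
    by (auto simp: defines_facet_def PT_def e_def [symmetric] e_avec)
qed

theorem proposition5:
  fixes T :: nat and \<sigma> :: "nat \<Rightarrow> nat"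
  assumes "T \<ge> 5" and "\<sigma> permutes {1, 2, 3}"
  shows "defines_facet T (act \<sigma> (vector [1, 0, 0, 0, 0, 0]))"
  using defines_facet_act [OF assms(2) defines_facet_x12 [OF assms(1)]] .

end
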